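(* Let $p\geq 7$ be a prime, $\zeta=e^{2\pi i/p}$, $w=(\zeta,\zeta^2,\dots,\zeta^p)\in\mathbb{C}^p$, and $\sigma\in S_p$. Let $a_1,\dots,a_p\in\mathbb{R}$, not all zero, and let $H=(a_1,\dots,a_p)^\perp$. Suppose $H$ contains both $\sigma w$ and $(ij)(kl)\sigma w$, where $i,j,k,l$ are distinct. Then either \[ \sigma^{-1}(i)+\sigma^{-1}(j)\equiv\sigma^{-1}(k)+\sigma^{-1}(l)\pmod p, \] or $a_i=a_j$ and $a_k=a_l$.
   Context: $S_p$ acts on $\mathbb{C}^p$ by permuting coordinates: the $j$-th coordinate of $\epsilon x$ is $x_{\epsilon^{-1}(j)}$. $H=(a_1,\dots,a_p)^\perp$ is $\{x\in\mathbb{C}^p:\sum_m a_mx_m=0\}$. *)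

theory Defs
  imports Complex_Main "HOL-Combinatorics.Combinatorics" "HOL-Computational_Algebra.Primes"
begin

text \<open>Vectors in C^p are functions nat => complex, coordinates indexed by 1..p.\<close>

definition zeta :: "nat \<Rightarrow> complex" where
  "zeta p = cis (2 * pi / real p)"

definition wvec :: "nat \<Rightarrow> nat \<Rightarrow> complex" where
  "wvec p = (\<lambda>m. zeta p ^ m)"

definition perm_act :: "(nat \<Rightarrow> nat) \<Rightarrow> (nat \<Rightarrow> complex) \<Rightarrow> (nat \<Rightarrow> complex)" where
  "perm_act e x = (\<lambda>j. x (inv e j))"

definition hyperplane :: "nat \<Rightarrow> (nat \<Rightarrow> real) \<Rightarrow> (nat \<Rightarrow> complex) set" where
  "hyperplane p a = {x. (\<Sum>m=1..p. complex_of_real (a m) * x m) = 0}"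

end

theory Submission
  imports Defs
begin

text \<open>
  Write u, v, s, t for the preimages of i, j, k, l under \<sigma>. Subtracting the two linear
  equations leaves only the four moved coordinates:
  (a i - a j)(\<zeta>^u - \<zeta>^v) + (a k - a l)(\<zeta>^s - \<zeta>^t) = 0.
  Now \<zeta>^u - \<zeta>^v = 2i sin(\<pi>(u - v)/p) cis(\<pi>(u + v)/p) with a nonzero sine, so this is
  a vanishing real combination of the unit vectors cis(\<pi>(u + v)/p) and cis(\<pi>(s + t)/p).
  Both coefficients must vanish unless these vectors are parallel, that is, unless
  sin(\<pi>(u + v - s - t)/p) = 0, which means u + v \<equiv> s + t (mod p).
\<close>

lemma cis_diff_eq:
  "cis a - cis b = 2 * \<i> * of_real (sin ((a - b) / 2)) * cis ((a + b) / 2)"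
proof -
  have "cis a - cis b = cis ((a + b) / 2) * (cis ((a - b) / 2) - cis (- ((a - b) / 2)))"
    by (simp add: cis_mult right_diff_distrib field_simps)
  also have "cis c - cis (- c) = 2 * \<i> * of_real (sin c)" for c
    by (simp add: complex_eq_iff)
  finally show ?thesis
    by (simp add: mult.commute mult.left_commute)
qed

lemma sin_pi_mult_of_int_div_eq_0_iff:
  "sin (pi * of_int n / of_int m) = 0 \<longleftrightarrow> m = 0 \<or> m dvd n"
  using sin_times_pi_eq_0[of "of_int n / of_int m"]
  by (simp add: of_int_div_of_int_in_Ints_iff mult.commute)

lemma of_real_cis_lincomb_eq_0:
  fixes r s A B :: real
  assumes "of_real r * cis A + of_real s * cis B = 0"
  shows "(r = 0 \<and> s = 0) \<or> sin (A - B) = 0"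
proof -
  have "cis B * (of_real r * cis (A - B) + of_real s) = of_real r * cis A + of_real s * cis B"
    by (simp add: algebra_simps cis_mult)
  then have "cis B * (of_real r * cis (A - B) + of_real s) = 0"
    using assms by simp
  then have rotated: "of_real r * cis (A - B) + of_real s = 0"
    by (simp add: cis_neq_zero)
  then have "r * sin (A - B) = 0"
    by (simp add: complex_eq_iff)
  with rotated show ?thesis
    by auto
qed

lemma zeta_power: "zeta p ^ n = cis (2 * pi * real n / real p)"
  unfolding zeta_def DeMoivre by (simp add: mult.commute)

lemma sin_pi_mult_nat_diff_div_eq_0_iff:
  assumes "p > 0"
  shows "sin (pi * (real m - real n) / real p) = 0 \<longleftrightarrow> m mod p = n mod p"
proof -
  have "sin (pi * (real m - real n) / real p) = sin (pi * of_int (int m - int n) / of_int (int p))"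
    by simp
  also have "\<dots> = 0 \<longleftrightarrow> int p dvd int m - int n"
    using sin_pi_mult_of_int_div_eq_0_iff[of "int m - int n" "int p"] assms by simp
  also have "\<dots> \<longleftrightarrow> m mod p = n mod p"
    by (metis mod_eq_dvd_iff of_nat_eq_iff of_nat_mod)
  finally show ?thesis .
qed

lemma zeta_power_diff_lincomb_eq_0:
  fixes \<alpha> \<beta> :: real
  assumes "p > 0" "u mod p \<noteq> v mod p" "s mod p \<noteq> t mod p"
    and "of_real \<alpha> * (zeta p ^ u - zeta p ^ v) + of_real \<beta> * (zeta p ^ s - zeta p ^ t) = 0"
  shows "(u + v) mod p = (s + t) mod p \<or> (\<alpha> = 0 \<and> \<beta> = 0)"
proof -
  define \<theta> where "\<theta> m = 2 * pi * real m / real p" for m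
  have half_diff: "(\<theta> m - \<theta> n) / 2 = pi * (real m - real n) / real p" for m n
    unfolding \<theta>_def using assms(1) by (simp add: field_simps)
  have half_sum_diff: "(\<theta> u + \<theta> v) / 2 - (\<theta> s + \<theta> t) / 2
      = pi * (real (u + v) - real (s + t)) / real p"
    unfolding \<theta>_def using assms(1) by (simp add: field_simps)
  define S1 where "S1 = sin ((\<theta> u - \<theta> v) / 2)"
  define S2 where "S2 = sin ((\<theta> s - \<theta> t) / 2)"
  have "S1 \<noteq> 0" "S2 \<noteq> 0"
    unfolding S1_def S2_def half_diff
    using assms(1-3) by (simp_all add: sin_pi_mult_nat_diff_div_eq_0_iff)
  have "2 * \<i> * (of_real (\<alpha> * S1) * cis ((\<theta> u + \<theta> v) / 2)
                + of_real (\<beta> * S2) * cis ((\<theta> s + \<theta> t) / 2)) = 0"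
    using assms(4) unfolding zeta_power cis_diff_eq S1_def S2_def \<theta>_def
    by (simp add: algebra_simps)
  then have "(\<alpha> * S1 = 0 \<and> \<beta> * S2 = 0) \<or> sin ((\<theta> u + \<theta> v) / 2 - (\<theta> s + \<theta> t) / 2) = 0"
    by (intro of_real_cis_lincomb_eq_0) simp
  then show ?thesis
    using \<open>S1 \<noteq> 0\<close> \<open>S2 \<noteq> 0\<close> sin_pi_mult_nat_diff_div_eq_0_iff[OF assms(1), of "u + v" "s + t"]
    unfolding half_sum_diff by auto
qed

lemma inj_on_mod_atLeastAtMost: "inj_on (\<lambda>m. m mod p) {1..p :: nat}"
proof -
  have "m mod p = (if m = p then 0 else m)" if "m \<in> {1..p}" for m
    using that by auto
  then show ?thesis
    by (auto simp: inj_on_def split: if_splits)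
qed

lemma permutes_atLeastAtMost_mod_neq:
  fixes \<pi> :: "nat \<Rightarrow> nat"
  assumes "\<pi> permutes {1..p}" "m \<in> {1..p}" "n \<in> {1..p}" "m \<noteq> n"
  shows "\<pi> m mod p \<noteq> \<pi> n mod p"
proof -
  have "\<pi> m \<noteq> \<pi> n"
    using assms(1,4) by (simp add: permutes_inj inj_eq)
  moreover have "\<pi> m \<in> {1..p}" "\<pi> n \<in> {1..p}"
    using assms(2,3) permutes_in_image[OF assms(1)] by blast+
  ultimately show ?thesis
    using inj_onD[OF inj_on_mod_atLeastAtMost] by blast
qed

lemma perm_act_comp:
  assumes "bij f" "bij g"
  shows "perm_act (f \<circ> g) x = perm_act g x \<circ> inv f"
  unfolding perm_act_def o_inv_distrib[OF assms] by (simp add: comp_def)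

lemma hyperplane_double_transposition:
  assumes "{i, j, k, l} \<subseteq> {1..p}" "distinct [i, j, k, l]"
    and "x \<in> hyperplane p a" "x \<circ> (transpose k l \<circ> transpose i j) \<in> hyperplane p a"
  shows "of_real (a i - a j) * (x i - x j) + of_real (a k - a l) * (x k - x l) = 0"
proof -
  define t where "t = transpose k l \<circ> transpose i j"
  define g where "g m = of_real (a m) * (x m - x (t m))" for m
  have "(\<Sum>m=1..p. g m) = 0"
    using assms(3,4) unfolding hyperplane_def g_def t_def by (simp add: algebra_simps sum_subtractf)
  also have "(\<Sum>m=1..p. g m) = (\<Sum>m\<in>{i, j, k, l}. g m)"
    using assms(1) by (intro sum.mono_neutral_right) (auto simp: g_def t_def)
  also have "\<dots> = g i + g j + g k + g l"
    using assms(2) by (simp add: add.assoc)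
  finally show ?thesis
    using assms(2) unfolding g_def t_def by (simp add: algebra_simps)
qed

theorem lemma4p7:
  fixes p :: nat and \<sigma> :: "nat \<Rightarrow> nat" and a :: "nat \<Rightarrow> real" and i j k l :: nat
  assumes "prime p" and "p \<ge> 7"
    and "\<sigma> permutes {1..p}"
    and "\<exists>m\<in>{1..p}. a m \<noteq> 0"
    and "i \<in> {1..p}" "j \<in> {1..p}" "k \<in> {1..p}" "l \<in> {1..p}"
    and "distinct [i, j, k, l]"
    and "perm_act \<sigma> (wvec p) \<in> hyperplane p a"
    and "perm_act (transpose i j \<circ> transpose k l \<circ> \<sigma>) (wvec p) \<in> hyperplane p a"
  shows "(inv \<sigma> i + inv \<sigma> j) mod p = (inv \<sigma> k + inv \<sigma> l) mod p
         \<or> (a i = a j \<and> a k = a l)"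
proof -
  let ?x = "perm_act \<sigma> (wvec p)"
  have "perm_act (transpose i j \<circ> transpose k l \<circ> \<sigma>) (wvec p) = ?x \<circ> (transpose k l \<circ> transpose i j)"
    using permutes_bij[OF assms(3)] by (simp add: perm_act_comp o_inv_distrib bij_comp)
  then have "of_real (a i - a j) * (?x i - ?x j) + of_real (a k - a l) * (?x k - ?x l) = 0"
    using assms(5-11) by (intro hyperplane_double_transposition) auto
  then have "of_real (a i - a j) * (zeta p ^ inv \<sigma> i - zeta p ^ inv \<sigma> j)
      + of_real (a k - a l) * (zeta p ^ inv \<sigma> k - zeta p ^ inv \<sigma> l) = 0"
    by (simp add: perm_act_def wvec_def)
  moreover have "inv \<sigma> m mod p \<noteq> inv \<sigma> n mod p" if "m \<in> {1..p}" "n \<in> {1..p}" "m \<noteq> n" for m n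
    using permutes_inv[OF assms(3)] that by (rule permutes_atLeastAtMost_mod_neq)
  ultimately have "(inv \<sigma> i + inv \<sigma> j) mod p = (inv \<sigma> k + inv \<sigma> l) mod p
      \<or> (a i - a j = 0 \<and> a k - a l = 0)"
    using assms(2,5-9) by (intro zeta_power_diff_lincomb_eq_0) auto
  then show ?thesis
    by simp
qed

end
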